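(* Let $q>1$ and let $\rho$ be a positive $2\pi$-periodic $C^2$ function with $(\ln\rho)''(t)<\sqrt{q}/(1+\sqrt{q})$ for all $t$. For $\eta\in\mathbb{S}^1$ and $j,l\in\{1,2\}$ let $\mathcal{T}_{j,l}\eta$ be defined as follows: with $\eta_l=(-1)^{l-1}\eta$, $\theta_q=\arccos(1/\sqrt{q})$ and $h(\theta)=\frac{\sqrt{q}\sin\theta}{\sqrt{q}\cos\theta+1}$, the equation $(\ln\rho)'(\theta)=h(\theta-\theta_{\eta_l})$ has exactly two solutions $\theta\in\mathbb{R}/(2\pi\mathbb{Z})$; $\mathcal{T}_{1,l}\eta$ is the one with $\theta-\theta_{\eta_l}\in(\theta_q-\pi,\pi-\theta_q)$ and $\mathcal{T}_{2,l}\eta$ the one with $\theta-\theta_{\eta_l}\in(\pi-\theta_q,\pi+\theta_q)$ (mod $2\pi$). Then for each $j,l\in\{1,2\}$, $\mathcal{T}_{j,l}:\mathbb{S}^1\to\mathbb{S}^1$ is a bijection, and, viewed as a map $\mathbb{R}/(2\pi\mathbb{Z})\to\mathbb{R}/(2\pi\mathbb{Z})$ via $\eta\leftrightarrow\theta_\eta$, it is $C^1$ and locally strictly increasing.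
   Context: We identify $\mathbb{S}^1$ with $\mathbb{R}/(2\pi\mathbb{Z})$ via $\theta\mapsto(\cos\theta,\sin\theta)^T$; $\theta_\eta$ denotes the angular coordinate of $\eta$. "Locally strictly increasing" (and $C^1$) means: for any $t_0\in\mathbb{R}$ and $\kappa\in\mathbb{Z}$, the lift $\mathcal{T}_{j,l}:(t_0,t_0+2\pi)\to(\theta_0+2\kappa\pi,\theta_0+2(\kappa+1)\pi)$, with $\theta_0$ a representative of $\mathcal{T}_{j,l}t_0$, is strictly increasing and $C^1$. *)

theory Defs
  imports "HOL-Analysis.Analysis"
begin

text \<open>Angles are real numbers, understood modulo 2 pi; the circle point of angle t is cis t.\<close>

definition theta_q :: "real \<Rightarrow> real" where
  "theta_q q = arccos (1 / sqrt q)"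

definition hfun :: "real \<Rightarrow> real \<Rightarrow> real" where
  "hfun q \<theta> = sqrt q * sin \<theta> / (sqrt q * cos \<theta> + 1)"

definition in_mod2pi :: "real \<Rightarrow> real \<Rightarrow> real \<Rightarrow> bool" where
  "in_mod2pi x a b \<longleftrightarrow> (\<exists>k::int. a < x + 2 * pi * of_int k \<and> x + 2 * pi * of_int k < b)"

text \<open>theta solves (ln rho)'(theta) = h(theta - psi), where psi is the angle of eta_l
  (h must be defined there, i.e. its denominator is nonzero)\<close>
definition is_sol :: "(real \<Rightarrow> real) \<Rightarrow> real \<Rightarrow> real \<Rightarrow> real \<Rightarrow> bool" where
  "is_sol \<rho> q \<psi> \<theta> \<longleftrightarrow>
     sqrt q * cos (\<theta> - \<psi>) + 1 \<noteq> 0 \<and> deriv (\<lambda>t. ln (\<rho> t)) \<theta> = hfun q (\<theta> - \<psi>)"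

definition sol_j :: "(real \<Rightarrow> real) \<Rightarrow> real \<Rightarrow> nat \<Rightarrow> real \<Rightarrow> real \<Rightarrow> bool" where
  "sol_j \<rho> q j \<psi> \<theta> \<longleftrightarrow> is_sol \<rho> q \<psi> \<theta> \<and>
     (if j = 1 then in_mod2pi (\<theta> - \<psi>) (theta_q q - pi) (pi - theta_q q)
      else in_mod2pi (\<theta> - \<psi>) (pi - theta_q q) (pi + theta_q q))"

text \<open>T_{j,l} on angles: phi is the angle of eta, eta_l = (-1)^(l-1) eta has angle phi + (l-1) pi;
  the value is the representative in [0, 2 pi).\<close>
definition ang_T :: "(real \<Rightarrow> real) \<Rightarrow> real \<Rightarrow> nat \<Rightarrow> nat \<Rightarrow> real \<Rightarrow> real" where
  "ang_T \<rho> q j l \<phi> =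
     (THE \<theta>. \<theta> \<in> {0..<2*pi} \<and> sol_j \<rho> q j (\<phi> + real (l - 1) * pi) \<theta>)"

text \<open>T_{j,l} as a map of the unit circle (identified with complex numbers of modulus 1)\<close>
definition circ_T :: "(real \<Rightarrow> real) \<Rightarrow> real \<Rightarrow> nat \<Rightarrow> nat \<Rightarrow> complex \<Rightarrow> complex" where
  "circ_T \<rho> q j l \<eta> = cis (ang_T \<rho> q j l (Arg \<eta>))"

end

(*
  Write f = (ln rho)'. On each branch the function h is strictly increasing onto the reals, with
  h' >= sqrt q / (1 + sqrt q) and an explicit inverse hinv_j, so theta solves the equation for psi
  on branch j iff G_j theta = psi (mod 2 pi), where G_j theta = theta - hinv_j (f theta).
  As f' < sqrt q / (1 + sqrt q) <= h', the lift G_j has a positive continuous derivative, and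
  G_j (theta + 2 pi) = G_j theta + 2 pi by periodicity of rho: G_j lifts an orientation-preserving
  C^1 diffeomorphism of the circle. Hence T_{j,l} is the circle map lifted by
  phi |-> G_j^-1 (phi + (l - 1) pi), which is again such a lift; this gives bijectivity and the
  local C^1 monotone lifts.
*)

theory Submission
  imports Defs "HOL-Library.Real_Mod"
begin

section \<open>Lifts of circle diffeomorphisms\<close>

lemma C1_differentiable_on_UNIV_iff_deriv:
  fixes f :: "real \<Rightarrow> real"
  shows "f C1_differentiable_on UNIV \<longleftrightarrow>
    (\<forall>x. (f has_real_derivative deriv f x) (at x)) \<and> continuous_on UNIV (deriv f)"
proof
  assume "f C1_differentiable_on UNIV"
  then obtain D where D: "\<And>x. (f has_real_derivative D x) (at x)" "continuous_on UNIV D"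
    unfolding C1_differentiable_on_def has_real_derivative_iff_has_vector_derivative by blast
  then have "deriv f = D"
    using DERIV_imp_deriv by blast
  then show "(\<forall>x. (f has_real_derivative deriv f x) (at x)) \<and> continuous_on UNIV (deriv f)"
    using D by simp
next
  assume "(\<forall>x. (f has_real_derivative deriv f x) (at x)) \<and> continuous_on UNIV (deriv f)"
  then show "f C1_differentiable_on UNIV"
    unfolding C1_differentiable_on_def has_real_derivative_iff_has_vector_derivative by blast
qed

lemma C1_differentiable_on_UNIV_divide:
  fixes f g :: "real \<Rightarrow> real"
  assumes "f C1_differentiable_on UNIV" "g C1_differentiable_on UNIV" "\<And>x. g x \<noteq> 0"
  shows "(\<lambda>x. f x / g x) C1_differentiable_on UNIV"
proof -
  define D where "D x = (deriv f x * g x - f x * deriv g x) / (g x * g x)" for x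
  have f: "\<And>x. (f has_real_derivative deriv f x) (at x)" "continuous_on UNIV (deriv f)"
    and g: "\<And>x. (g has_real_derivative deriv g x) (at x)" "continuous_on UNIV (deriv g)"
    using assms(1,2) unfolding C1_differentiable_on_UNIV_iff_deriv by auto
  have "((\<lambda>x. f x / g x) has_real_derivative D x) (at x)" for x
    unfolding D_def using f(1) g(1) assms(3) by (rule DERIV_divide)
  moreover from this have "deriv (\<lambda>x. f x / g x) = D"
    using DERIV_imp_deriv by blast
  moreover have "continuous_on UNIV D"
    unfolding D_def using f(2) g(2) assms C1_differentiable_imp_continuous_on
    by (auto intro!: continuous_intros)
  ultimately show ?thesis
    unfolding C1_differentiable_on_UNIV_iff_deriv by simp
qed

lemma deriv_periodic:
  fixes f :: "real \<Rightarrow> real"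
  assumes "\<And>x. f (x + T) = f x"
  shows "deriv f (x + T) = deriv f x"
  unfolding deriv_def DERIV_shift assms ..

lemma shift_equivariant_of_int:
  fixes G :: "real \<Rightarrow> real"
  assumes "\<And>x. G (x + T) = G x + T"
  shows "G (x + of_int n * T) = G x + of_int n * T"
proof (induction n rule: int_induct[where k = 0])
  case (step1 i)
  then show ?case
    using assms[of "x + of_int i * T"] by (simp add: algebra_simps)
next
  case (step2 i)
  then show ?case
    using assms[of "x + of_int (i - 1) * T"] by (simp add: algebra_simps)
qed simp

lemma rcong_shift_equivariant:
  fixes G :: "real \<Rightarrow> real"
  assumes "\<And>x. G (x + T) = G x + T" "[x = y] (rmod T)"
  shows "[G x = G y] (rmod T)"
  using assms shift_equivariant_of_int[of G T] unfolding rcong_altdef by metis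

lemma surj_if_shift_equivariant:
  fixes G :: "real \<Rightarrow> real"
  assumes "continuous_on UNIV G" "T > 0" "\<And>x. G (x + T) = G x + T"
  shows "surj G"
proof -
  have "y \<in> range G" for y
  proof -
    define n where "n = \<lfloor>(y - G 0) / T\<rfloor>"
    have G_nT: "G (of_int m * T) = G 0 + of_int m * T" for m
      using shift_equivariant_of_int[of G T 0 m] assms(3) by simp
    have "G (of_int n * T) \<le> y"
      using floor_divide_lower[OF assms(2), of "y - G 0"] G_nT[of n] unfolding n_def by simp
    moreover have "y \<le> G (of_int (n + 1) * T)"
      using floor_divide_upper[OF assms(2), of "y - G 0"] G_nT[of "n + 1"] unfolding n_def by simp
    moreover have "of_int n * T \<le> of_int (n + 1) * T"
      using assms(2) by simp
    ultimately show ?thesis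
      using IVT'[of G, OF _ _ _ continuous_on_subset[OF assms(1)]] by blast
  qed
  then show ?thesis
    by blast
qed

definition C1_circle_lift :: "(real \<Rightarrow> real) \<Rightarrow> bool" where
  "C1_circle_lift G \<longleftrightarrow>
     G C1_differentiable_on UNIV \<and> (\<forall>x. deriv G x > 0) \<and> (\<forall>x. G (x + 2*pi) = G x + 2*pi)"

lemma C1_circle_lift_intro:
  assumes "\<And>x. (G has_real_derivative G' x) (at x)" "continuous_on UNIV G'" "\<And>x. G' x > 0"
    and "\<And>x. G (x + 2*pi) = G x + 2*pi"
  shows "C1_circle_lift G"
proof -
  have "deriv G = G'"
    using assms(1) DERIV_imp_deriv by blast
  then show ?thesis
    unfolding C1_circle_lift_def C1_differentiable_on_UNIV_iff_deriv using assms by simp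
qed

lemma C1_circle_lift_strict_mono:
  assumes "C1_circle_lift G"
  shows "strict_mono G"
  using assms unfolding C1_circle_lift_def C1_differentiable_on_UNIV_iff_deriv strict_mono_def
  by (metis DERIV_pos_imp_increasing)

lemma C1_circle_lift_bij:
  assumes "C1_circle_lift G"
  shows "bij G"
proof (rule bijI)
  show "inj G"
    using C1_circle_lift_strict_mono[OF assms] strict_mono_imp_inj_on by blast
  show "surj G"
    using assms unfolding C1_circle_lift_def
    by (intro surj_if_shift_equivariant[where T = "2*pi"])
       (auto intro: C1_differentiable_imp_continuous_on)
qed

lemma C1_circle_lift_inv:
  assumes "C1_circle_lift G"
  shows "C1_circle_lift (inv G)"
proof (rule C1_circle_lift_intro)
  have G': "\<And>x. (G has_real_derivative deriv G x) (at x)" "continuous_on UNIV (deriv G)"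
    and pos: "\<And>x. deriv G x > 0" and shift: "\<And>x. G (x + 2*pi) = G x + 2*pi"
    using assms unfolding C1_circle_lift_def C1_differentiable_on_UNIV_iff_deriv by auto
  have "bij G"
    using C1_circle_lift_bij[OF assms] .
  then have GH: "G (inv G y) = y" and HG: "inv G (G x) = x" for x y
    by (simp_all add: bij_is_surj bij_is_inj surj_f_inv_f)
  have cont: "isCont (inv G) y" for y
  proof -
    have "isCont (inv G) (G (inv G y))"
      by (rule isCont_inverse_function[where d = 1]) (auto simp: HG intro: DERIV_isCont G'(1))
    then show ?thesis
      by (simp add: GH)
  qed
  show "(inv G has_real_derivative inverse (deriv G (inv G y))) (at y)" for y
  proof (rule DERIV_inverse_function[where a = "y - 1" and b = "y + 1"])
    show "(G has_real_derivative deriv G (inv G y)) (at (inv G y))"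
      by (rule G'(1))
  qed (use pos GH cont in \<open>auto simp: less_imp_neq[symmetric]\<close>)
  have "continuous_on UNIV (\<lambda>y. deriv G (inv G y))"
    using cont G'(2) by (auto intro: continuous_on_compose2 continuous_at_imp_continuous_on)
  then show "continuous_on UNIV (\<lambda>y. inverse (deriv G (inv G y)))"
    using pos by (auto intro!: continuous_on_inverse simp: less_imp_neq[symmetric])
  show "inverse (deriv G (inv G y)) > 0" for y
    using pos by simp
  show "inv G (y + 2*pi) = inv G y + 2*pi" for y
    using HG[of "inv G y + 2*pi"] shift[of "inv G y"] GH by simp
qed

lemma C1_circle_lift_translate:
  assumes "C1_circle_lift G"
  shows "C1_circle_lift (\<lambda>x. G (x + c))"
proof (rule C1_circle_lift_intro)
  have G': "\<And>x. (G has_real_derivative deriv G x) (at x)" "continuous_on UNIV (deriv G)"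
    using assms unfolding C1_circle_lift_def C1_differentiable_on_UNIV_iff_deriv by auto
  show "((\<lambda>x. G (x + c)) has_real_derivative deriv G (x + c)) (at x)" for x
    using G'(1)[of "x + c"] by (simp add: DERIV_shift)
  show "continuous_on UNIV (\<lambda>x. deriv G (x + c))"
    by (rule continuous_on_compose2[OF G'(2)]) (auto intro: continuous_intros)
  show "deriv G (x + c) > 0" for x
    using assms unfolding C1_circle_lift_def by blast
  show "G (x + 2*pi + c) = G (x + c) + 2*pi" for x
    using assms unfolding C1_circle_lift_def by (metis add.commute add.left_commute)
qed

lemma C1_circle_lift_rcong_iff:
  assumes "C1_circle_lift G"
  shows "[G \<theta> = \<psi>] (rmod 2*pi) \<longleftrightarrow> [\<theta> = inv G \<psi>] (rmod 2*pi)"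
proof -
  have "bij G"
    using C1_circle_lift_bij[OF assms] .
  then have GH: "G (inv G y) = y" and HG: "inv G (G x) = x" for x y
    by (simp_all add: bij_is_surj bij_is_inj surj_f_inv_f)
  have "\<And>x. G (x + 2*pi) = G x + 2*pi" "\<And>x. inv G (x + 2*pi) = inv G x + 2*pi"
    using assms C1_circle_lift_inv[OF assms] unfolding C1_circle_lift_def by auto
  then show ?thesis
    using rcong_shift_equivariant[of G "2*pi"] rcong_shift_equivariant[of "inv G" "2*pi"] GH HG
    by metis
qed

lemma rcong_iff_eq_rmod:
  assumes "m > 0" "\<theta> \<in> {0..<m}"
  shows "[\<theta> = v] (rmod m) \<longleftrightarrow> \<theta> = v rmod m"
  using assms unfolding rcong_def by simp

lemma C1_circle_lift_solutions:
  assumes "C1_circle_lift G"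
  shows "{\<theta> \<in> {0..<2*pi}. [G \<theta> = \<psi>] (rmod 2*pi)} = {inv G \<psi> rmod (2*pi)}"
  unfolding C1_circle_lift_rcong_iff[OF assms]
  using rcong_iff_eq_rmod[of "2*pi"] rmod_nonneg[of "2*pi"] rmod_less[of "2*pi"] by auto

lemma cis_Arg_cis_lift:
  fixes F :: "real \<Rightarrow> real"
  assumes "\<And>x. F (x + 2*pi) = F x + 2*pi"
  shows "cis (F (Arg (cis t))) = cis (F t)"
proof -
  have "cis (Arg (cis t)) = cis t"
    by (simp add: cis_Arg sgn_div_norm)
  then have "[Arg (cis t) = t] (rmod 2*pi)"
    by (simp add: cis_eq_iff)
  then show ?thesis
    using rcong_shift_equivariant[of F "2*pi", OF assms] by (simp add: cis_eq_iff)
qed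

lemma bij_betw_sphere_circle_lifts:
  fixes P Q :: "real \<Rightarrow> real"
  assumes "\<And>x. P (Q x) = x" "\<And>x. Q (P x) = x"
    and "\<And>x. P (x + 2*pi) = P x + 2*pi" "\<And>x. Q (x + 2*pi) = Q x + 2*pi"
  shows "bij_betw (\<lambda>\<eta>. cis (P (Arg \<eta>))) (sphere 0 1) (sphere 0 1)"
proof (rule bij_betw_byWitness[where f' = "\<lambda>\<zeta>. cis (Q (Arg \<zeta>))"])
  have cis_Arg_sphere: "cis (Arg \<eta>) = \<eta>" if "\<eta> \<in> sphere 0 1" for \<eta>
  proof -
    have "\<eta> \<noteq> 0" "norm \<eta> = 1"
      using that by auto
    then show ?thesis
      by (simp add: cis_Arg sgn_div_norm)
  qed
  show "\<forall>\<eta>\<in>sphere 0 1. cis (Q (Arg (cis (P (Arg \<eta>))))) = \<eta>"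
    using cis_Arg_cis_lift[of Q, OF assms(4)] assms(2) cis_Arg_sphere by simp
  show "\<forall>\<zeta>\<in>sphere 0 1. cis (P (Arg (cis (Q (Arg \<zeta>))))) = \<zeta>"
    using cis_Arg_cis_lift[of P, OF assms(3)] assms(1) cis_Arg_sphere by simp
qed auto

lemma C1_circle_lift_local_lift:
  assumes "C1_circle_lift P"
  shows "\<exists>L. continuous_on {t0..t0 + 2*pi} L \<and>
    L t0 = P t0 rmod (2*pi) + 2 * pi * of_int \<kappa> \<and>
    L (t0 + 2*pi) = P t0 rmod (2*pi) + 2 * pi * (of_int \<kappa> + 1) \<and>
    (\<forall>t\<in>{t0..t0 + 2*pi}. cis (L t) = cis (P t rmod (2*pi))) \<and>
    strict_mono_on {t0..t0 + 2*pi} L \<and>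
    L C1_differentiable_on {t0<..<t0 + 2*pi}"
proof (intro exI conjI)
  define L where "L t = P t + 2 * pi * of_int (\<kappa> - \<lfloor>P t0 / (2*pi)\<rfloor>)" for t
  have C1: "L C1_differentiable_on UNIV"
    using assms unfolding L_def C1_circle_lift_def by simp
  then show "continuous_on {t0..t0 + 2*pi} L"
    using C1_differentiable_imp_continuous_on continuous_on_subset by blast
  show "L C1_differentiable_on {t0<..<t0 + 2*pi}"
    using C1 C1_differentiable_on_subset by blast
  show "L t0 = P t0 rmod (2*pi) + 2 * pi * of_int \<kappa>"
    unfolding L_def rmod_def by (simp add: algebra_simps)
  show "L (t0 + 2*pi) = P t0 rmod (2*pi) + 2 * pi * (of_int \<kappa> + 1)"
    using assms unfolding L_def rmod_def C1_circle_lift_def by (simp add: algebra_simps)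
  show "\<forall>t\<in>{t0..t0 + 2*pi}. cis (L t) = cis (P t rmod (2*pi))"
    unfolding L_def cis_rmod cis_eq_iff rcong_altdef
    by (auto intro: exI[of _ "\<lfloor>P t0 / (2*pi)\<rfloor> - \<kappa>"] simp: algebra_simps)
  show "strict_mono_on {t0..t0 + 2*pi} L"
    using C1_circle_lift_strict_mono[OF assms]
    unfolding L_def strict_mono_def by (auto intro: strict_mono_onI)
qed

section \<open>The function \<open>h\<close> on its two branches\<close>

lemma theta_q_bounds:
  assumes "q > 1"
  shows "0 < theta_q q" "theta_q q < pi" "cos (theta_q q) = 1 / sqrt q"
proof -
  have "-1 < 1 / sqrt q" "1 / sqrt q < 1"
    using assms by (auto intro: less_trans[of _ 0])
  then show "0 < theta_q q" "theta_q q < pi" "cos (theta_q q) = 1 / sqrt q"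
    unfolding theta_q_def using arccos_lt_bounded cos_arccos by auto
qed

definition on_branch :: "real \<Rightarrow> nat \<Rightarrow> real \<Rightarrow> bool" where
  "on_branch q j x \<longleftrightarrow>
     (if j = 1 then theta_q q - pi < x \<and> x < pi - theta_q q
      else pi - theta_q q < x \<and> x < pi + theta_q q)"

lemma on_branch_1_iff:
  assumes "q > 1"
  shows "on_branch q 1 x \<longleftrightarrow> -pi < x \<and> x < pi \<and> sqrt q * cos x + 1 > 0"
proof -
  note t = theta_q_bounds[OF assms]
  have "sqrt q * cos x + 1 > 0 \<longleftrightarrow> - 1 / sqrt q < cos \<bar>x\<bar>"
    using assms by (simp add: field_simps) linarith
  also have "\<dots> \<longleftrightarrow> cos (pi - theta_q q) < cos \<bar>x\<bar>"
    using t(3) by simp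
  finally have "sqrt q * cos x + 1 > 0 \<longleftrightarrow> cos (pi - theta_q q) < cos \<bar>x\<bar>" .
  moreover have "-pi < x \<and> x < pi \<Longrightarrow> cos (pi - theta_q q) < cos \<bar>x\<bar> \<longleftrightarrow> \<bar>x\<bar> < pi - theta_q q"
    using t by (intro cos_mono_less_eq) auto
  ultimately show ?thesis
    using t unfolding on_branch_def by (auto simp: abs_less_iff)
qed

lemma on_branch_2_iff:
  assumes "q > 1"
  shows "on_branch q 2 x \<longleftrightarrow> 0 < x \<and> x < 2*pi \<and> sqrt q * cos x + 1 < 0"
proof -
  note t = theta_q_bounds[OF assms]
  have "cos x = - cos \<bar>x - pi\<bar>"
    by (simp add: cos_diff)
  then have "sqrt q * cos x + 1 < 0 \<longleftrightarrow> 1 / sqrt q < cos \<bar>x - pi\<bar>"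
    using assms by (simp add: field_simps) linarith
  then have "sqrt q * cos x + 1 < 0 \<longleftrightarrow> cos (theta_q q) < cos \<bar>x - pi\<bar>"
    using t(3) by simp
  moreover have "0 < x \<and> x < 2*pi \<Longrightarrow> cos (theta_q q) < cos \<bar>x - pi\<bar> \<longleftrightarrow> \<bar>x - pi\<bar> < theta_q q"
    using t by (intro cos_mono_less_eq) auto
  ultimately show ?thesis
    using t unfolding on_branch_def by (auto simp: abs_less_iff)
qed

lemma on_branch_denominator_nonzero:
  assumes "q > 1" "j \<in> {1,2}" "on_branch q j x"
  shows "sqrt q * cos x + 1 \<noteq> 0"
  using assms on_branch_1_iff on_branch_2_iff by fastforce

lemma in_mod2pi_iff_rcong:
  "in_mod2pi x a b \<longleftrightarrow> (\<exists>y. [x = y] (rmod 2*pi) \<and> a < y \<and> y < b)"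
  unfolding in_mod2pi_def rcong_altdef by (auto simp: mult_ac)

lemma in_mod2pi_branch_1_iff:
  assumes "q > 1"
  shows "in_mod2pi x (theta_q q - pi) (pi - theta_q q) \<longleftrightarrow> sqrt q * cos x + 1 > 0"
proof
  assume "in_mod2pi x (theta_q q - pi) (pi - theta_q q)"
  then obtain y where "[x = y] (rmod 2*pi)" "on_branch q 1 y"
    unfolding in_mod2pi_iff_rcong on_branch_def by auto
  then show "sqrt q * cos x + 1 > 0"
    using on_branch_1_iff[OF assms] cos_rcong by metis
next
  assume pos: "sqrt q * cos x + 1 > 0"
  define y where "y = (x + pi) rmod (2*pi) - pi"
  have "[x + pi = (x + pi) rmod (2*pi)] (rmod 2*pi)"
    by simp
  then have xy: "[x = y] (rmod 2*pi)"
    unfolding y_def by (metis add_diff_cancel_right' rcong_diff rcong_refl)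
  then have "cos y = cos x"
    using cos_rcong by metis
  moreover have "y \<noteq> -pi"
  proof
    assume "y = -pi"
    then have "cos x = -1"
      using \<open>cos y = cos x\<close> by simp
    then show False
      using pos assms by simp
  qed
  moreover have "-pi \<le> y" "y < pi"
    unfolding y_def using rmod_nonneg[of "2*pi"] rmod_less[of "2*pi"] by auto
  ultimately have "on_branch q 1 y"
    using pos on_branch_1_iff[OF assms] by auto
  then show "in_mod2pi x (theta_q q - pi) (pi - theta_q q)"
    using xy unfolding in_mod2pi_iff_rcong on_branch_def by auto
qed

lemma in_mod2pi_branch_2_iff:
  assumes "q > 1"
  shows "in_mod2pi x (pi - theta_q q) (pi + theta_q q) \<longleftrightarrow> sqrt q * cos x + 1 < 0"
proof
  assume "in_mod2pi x (pi - theta_q q) (pi + theta_q q)"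
  then obtain y where "[x = y] (rmod 2*pi)" "on_branch q 2 y"
    unfolding in_mod2pi_iff_rcong on_branch_def by auto
  then show "sqrt q * cos x + 1 < 0"
    using on_branch_2_iff[OF assms] cos_rcong by metis
next
  assume neg: "sqrt q * cos x + 1 < 0"
  define y where "y = x rmod (2*pi)"
  have xy: "[x = y] (rmod 2*pi)"
    unfolding y_def by simp
  then have "cos y = cos x"
    using cos_rcong by metis
  moreover have "y \<noteq> 0"
  proof
    assume "y = 0"
    then have "sqrt q * cos x + 1 = sqrt q + 1"
      using \<open>cos y = cos x\<close> by simp
    then show False
      using neg assms by (smt (verit) real_sqrt_gt_zero)
  qed
  moreover have "0 \<le> y" "y < 2*pi"
    unfolding y_def using rmod_nonneg[of "2*pi"] rmod_less[of "2*pi"] by auto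
  ultimately have "on_branch q 2 y"
    using neg on_branch_2_iff[OF assms] by auto
  then show "in_mod2pi x (pi - theta_q q) (pi + theta_q q)"
    using xy unfolding in_mod2pi_iff_rcong on_branch_def by auto
qed

lemma branch_condition_iff:
  assumes "j \<in> {1,2}"
  shows "(if j = 1 then in_mod2pi x (theta_q q - pi) (pi - theta_q q)
          else in_mod2pi x (pi - theta_q q) (pi + theta_q q))
      \<longleftrightarrow> (\<exists>y. [x = y] (rmod 2*pi) \<and> on_branch q j y)"
  using assms unfolding in_mod2pi_iff_rcong on_branch_def by auto

lemma hfun_rcong:
  assumes "[x = y] (rmod 2*pi)"
  shows "hfun q x = hfun q y"
  using sin_rcong[OF assms] cos_rcong[OF assms] by (simp add: hfun_def)

definition hfun_deriv :: "real \<Rightarrow> real \<Rightarrow> real" where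
  "hfun_deriv q x = sqrt q * (sqrt q + cos x) / (sqrt q * cos x + 1)^2"

lemma hfun_has_real_derivative:
  assumes "sqrt q * cos x + 1 \<noteq> 0"
  shows "(hfun q has_real_derivative hfun_deriv q x) (at x)"
proof -
  have "sqrt q * cos x * (sqrt q * cos x + 1) - sqrt q * sin x * (sqrt q * - sin x)
      = sqrt q * sqrt q * ((sin x)^2 + (cos x)^2) + sqrt q * cos x"
    by algebra
  then have "(sqrt q * cos x * (sqrt q * cos x + 1) - sqrt q * sin x * (sqrt q * - sin x))
      / ((sqrt q * cos x + 1) * (sqrt q * cos x + 1)) = hfun_deriv q x"
    unfolding hfun_deriv_def by (simp add: power2_eq_square algebra_simps)
  moreover have "((\<lambda>x. sqrt q * sin x / (sqrt q * cos x + 1)) has_real_derivative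
      (sqrt q * cos x * (sqrt q * cos x + 1) - sqrt q * sin x * (sqrt q * - sin x))
      / ((sqrt q * cos x + 1) * (sqrt q * cos x + 1))) (at x)"
    using assms by (auto intro!: derivative_eq_intros)
  ultimately show ?thesis
    unfolding hfun_def[abs_def] by simp
qed

text \<open>The minimum of \<open>h'\<close>, attained where \<open>cos x = 1\<close>, is the bound in the hypothesis on
  \<open>(ln \<rho>)''\<close>.\<close>
lemma hfun_deriv_lower_bound:
  assumes "q > 1" "sqrt q * cos x + 1 \<noteq> 0"
  shows "sqrt q / (1 + sqrt q) \<le> hfun_deriv q x"
proof -
  define s u where "s = sqrt q" and "u = cos x"
  have s: "s > 1" and u: "-1 \<le> u" "u \<le> 1" and D: "(s * u + 1)^2 > 0"
    using assms unfolding s_def u_def by auto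
  have "s^2 * (1 + u) \<ge> 0"
    using u by simp
  then have "s^2 * (1 + u) + s - 1 \<ge> 0"
    using s by linarith
  then have "(1 - u) * (s^2 * (1 + u) + s - 1) \<ge> 0"
    using u by simp
  moreover have "(s + u) * (1 + s) - (s * u + 1)^2 = (1 - u) * (s^2 * (1 + u) + s - 1)"
    by algebra
  ultimately have "s * (s * u + 1)^2 \<le> s * ((s + u) * (1 + s))"
    using s by (intro mult_left_mono) auto
  then have "s / (1 + s) \<le> s * (s + u) / (s * u + 1)^2"
    using s D by (simp add: field_simps)
  then show ?thesis
    unfolding hfun_deriv_def s_def u_def .
qed

lemma hfun_deriv_pos:
  assumes "q > 1" "sqrt q * cos x + 1 \<noteq> 0"
  shows "hfun_deriv q x > 0"
proof -
  have "sqrt q / (1 + sqrt q) > 0"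
    using assms(1) by (simp add: add_pos_pos)
  then show ?thesis
    using hfun_deriv_lower_bound[OF assms] by linarith
qed

lemma hfun_strict_mono_on_branch:
  assumes "q > 1" "j \<in> {1,2}" "on_branch q j a" "on_branch q j b" "a < b"
  shows "hfun q a < hfun q b"
proof (rule DERIV_pos_imp_increasing[OF \<open>a < b\<close>])
  fix x assume "a \<le> x" "x \<le> b"
  then have "on_branch q j x"
    using assms(3,4) unfolding on_branch_def by (auto split: if_splits)
  then have "sqrt q * cos x + 1 \<noteq> 0"
    using on_branch_denominator_nonzero assms(1,2) by blast
  then show "\<exists>y. (hfun q has_real_derivative y) (at x) \<and> y > 0"
    using hfun_has_real_derivative hfun_deriv_pos assms(1) by blast
qed

text \<open>Where its denominator does not vanish, \<open>hfun q x = y\<close> iff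
  \<open>sin (x - arctan y) = hinv_sin q y\<close>. Of the two solutions modulo \<open>2\<pi>\<close>, the one with
  \<open>x - arctan y = arcsin (hinv_sin q y)\<close> lies on branch 1, the other on branch 2.\<close>
definition hinv_sin :: "real \<Rightarrow> real \<Rightarrow> real" where
  "hinv_sin q y = y / (sqrt q * sqrt (1 + y^2))"

definition hinv :: "real \<Rightarrow> nat \<Rightarrow> real \<Rightarrow> real" where
  "hinv q j y = arctan y + (if j = 1 then arcsin (hinv_sin q y) else pi - arcsin (hinv_sin q y))"

lemma hinv_sin_bounds:
  assumes "q > 1"
  shows "\<bar>hinv_sin q y\<bar> < 1" "sqrt q * sqrt (1 + y^2) * sqrt (1 - (hinv_sin q y)^2) > 1"
proof -
  have pos: "q * (1 + y^2) > 0"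
    using assms by (simp add: add_pos_nonneg)
  have y2: "y^2 \<le> y^2 * q"
    using assms mult_left_mono[of 1 q "y^2"] by simp
  have w2: "(hinv_sin q y)^2 = y^2 / (q * (1 + y^2))"
    using assms unfolding hinv_sin_def by (simp add: power_divide power_mult_distrib add_nonneg_nonneg)
  moreover have "y^2 < q * (1 + y^2)"
    using y2 assms by (simp add: algebra_simps)
  ultimately have w21: "(hinv_sin q y)^2 < 1"
    using pos by simp
  then show "\<bar>hinv_sin q y\<bar> < 1"
    by (simp add: abs_square_less_1)
  have "(sqrt q * sqrt (1 + y^2) * sqrt (1 - (hinv_sin q y)^2))^2
      = q * (1 + y^2) * (1 - (hinv_sin q y)^2)"
    using assms w21 by (simp add: power_mult_distrib add_nonneg_nonneg)
  also have "\<dots> = q * (1 + y^2) - y^2"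
    using pos unfolding w2 by (simp add: field_simps)
  also have "\<dots> > 1"
    using y2 assms by (simp add: algebra_simps)
  finally have "1^2 < (sqrt q * sqrt (1 + y^2) * sqrt (1 - (hinv_sin q y)^2))^2"
    by simp
  moreover have "0 \<le> sqrt q * sqrt (1 + y^2) * sqrt (1 - (hinv_sin q y)^2)"
    using assms w21 by (intro mult_nonneg_nonneg) auto
  ultimately show "sqrt q * sqrt (1 + y^2) * sqrt (1 - (hinv_sin q y)^2) > 1"
    by (rule power2_less_imp_less)
qed

lemma hfun_arctan_add:
  assumes "q > 0" "sin \<beta> = hinv_sin q y"
  shows "(sqrt q * cos (arctan y + \<beta>) + 1) * (1 + y^2) = sqrt q * sqrt (1 + y^2) * cos \<beta> + 1"
    and "sqrt q * cos (arctan y + \<beta>) + 1 \<noteq> 0 \<Longrightarrow> hfun q (arctan y + \<beta>) = y"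
proof -
  define r s where "r = sqrt (1 + y^2)" and "s = sqrt q"
  have r: "r > 0" "r^2 = 1 + y^2"
    unfolding r_def by (auto simp: add_pos_nonneg)
  have swr: "s * sin \<beta> * r = y"
    using assms r unfolding r_def s_def hinv_sin_def by simp
  have sin: "r * sin (arctan y + \<beta>) = y * cos \<beta> + sin \<beta>"
    and cos: "r * cos (arctan y + \<beta>) = cos \<beta> - y * sin \<beta>"
    using r unfolding sin_add cos_add r_def by (simp_all add: sin_arctan cos_arctan field_simps)
  show "(sqrt q * cos (arctan y + \<beta>) + 1) * (1 + y^2) = sqrt q * sqrt (1 + y^2) * cos \<beta> + 1"
    using sin cos swr r(2) unfolding s_def[symmetric] r_def[symmetric] by algebra
  have "(s * sin (arctan y + \<beta>)) * r^2 = (y * (s * cos (arctan y + \<beta>) + 1)) * r^2"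
    using sin cos swr r(2) by algebra
  then have "s * sin (arctan y + \<beta>) = y * (s * cos (arctan y + \<beta>) + 1)"
    using r(1) by simp
  then show "sqrt q * cos (arctan y + \<beta>) + 1 \<noteq> 0 \<Longrightarrow> hfun q (arctan y + \<beta>) = y"
    unfolding hfun_def s_def by (simp add: divide_eq_eq)
qed

lemma hinv_on_branch:
  assumes "q > 1" "j \<in> {1,2}"
  shows "on_branch q j (hinv q j y)" "hfun q (hinv q j y) = y"
proof -
  define w where "w = hinv_sin q y"
  define \<beta> where "\<beta> = (if j = 1 then arcsin w else pi - arcsin w)"
  note bounds = hinv_sin_bounds[OF assms(1), of y, folded w_def]
  have w: "-1 \<le> w" "w \<le> 1" and "w^2 \<le> 1"
    using bounds by (auto simp: abs_square_le_1)
  have ranges: "-(pi/2) < arctan y" "arctan y < pi/2" "-(pi/2) < arcsin w" "arcsin w < pi/2"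
    using arctan_bounded[of y] arcsin_lt_bounded[of w] bounds by auto
  have hinv: "hinv q j y = arctan y + \<beta>"
    unfolding hinv_def \<beta>_def w_def ..
  have sin\<beta>: "sin \<beta> = hinv_sin q y"
    unfolding \<beta>_def w_def[symmetric] using sin_arcsin[OF w] by simp
  have pos: "0 < 1 + y^2"
    by (simp add: add_pos_nonneg)
  note denom = hfun_arctan_add(1)[OF _ sin\<beta>, folded hinv]
  have "on_branch q j (hinv q j y) \<and> sqrt q * cos (hinv q j y) + 1 \<noteq> 0"
  proof (cases "j = 1")
    case True
    have "sqrt q * sqrt (1 + y^2) * cos \<beta> \<ge> 0"
      using True w \<open>w^2 \<le> 1\<close> assms(1) by (simp add: \<beta>_def cos_arcsin)
    then have "(sqrt q * cos (hinv q j y) + 1) * (1 + y^2) > 0"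
      using denom assms(1) by simp
    then have "sqrt q * cos (hinv q j y) + 1 > 0"
      using pos by (simp add: zero_less_mult_iff)
    then show ?thesis
      using on_branch_1_iff[OF assms(1)] ranges True unfolding hinv \<beta>_def by auto
  next
    case False
    have "sqrt q * sqrt (1 + y^2) * cos \<beta> < -1"
      using False bounds w by (simp add: \<beta>_def cos_arcsin w_def)
    then have "(sqrt q * cos (hinv q j y) + 1) * (1 + y^2) < 0"
      using denom assms(1) by simp
    then have "sqrt q * cos (hinv q j y) + 1 < 0"
      using pos by (simp add: mult_less_0_iff)
    then show ?thesis
      using on_branch_2_iff[OF assms(1)] ranges False assms(2) unfolding hinv \<beta>_def by auto
  qed
  then show "on_branch q j (hinv q j y)" "hfun q (hinv q j y) = y"
    using hfun_arctan_add(2)[OF _ sin\<beta>, folded hinv] assms(1) by auto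
qed

lemma hinv_denominator_nonzero:
  assumes "q > 1" "j \<in> {1,2}"
  shows "sqrt q * cos (hinv q j y) + 1 \<noteq> 0"
  using on_branch_denominator_nonzero hinv_on_branch assms by blast

lemma hinv_unique:
  assumes "q > 1" "j \<in> {1,2}" "on_branch q j x"
  shows "x = hinv q j (hfun q x)"
proof (rule ccontr)
  note hinv = hinv_on_branch[OF assms(1,2), of "hfun q x"]
  assume "x \<noteq> hinv q j (hfun q x)"
  then show False
    using hfun_strict_mono_on_branch[OF assms hinv(1)]
      hfun_strict_mono_on_branch[OF assms(1,2) hinv(1) assms(3)] hinv(2)
    by (auto simp: neq_iff)
qed

lemma isCont_hinv:
  assumes "q > 1"
  shows "isCont (hinv q j) y"
proof -
  have "1 + y^2 > 0"
    by (simp add: add_pos_nonneg)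
  then have "sqrt q * sqrt (1 + y^2) \<noteq> 0"
    using assms by simp
  then have "isCont (hinv_sin q) y"
    unfolding hinv_sin_def[abs_def] by (intro continuous_intros) auto
  moreover have "isCont arcsin (hinv_sin q y)"
    using hinv_sin_bounds(1)[OF assms, of y] by (intro isCont_arcsin) auto
  ultimately have "isCont (\<lambda>y. arcsin (hinv_sin q y)) y"
    by (rule isCont_o2)
  then show ?thesis
    unfolding hinv_def[abs_def] by (cases "j = 1") (auto intro!: continuous_intros isCont_arctan)
qed

lemma hinv_has_real_derivative:
  assumes "q > 1" "j \<in> {1,2}"
  shows "(hinv q j has_real_derivative inverse (hfun_deriv q (hinv q j y))) (at y)"
proof (rule DERIV_inverse_function[where a = "y - 1" and b = "y + 1"])
  have "sqrt q * cos (hinv q j y) + 1 \<noteq> 0"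
    using hinv_denominator_nonzero[OF assms] .
  then show "(hfun q has_real_derivative hfun_deriv q (hinv q j y)) (at (hinv q j y))"
    and "hfun_deriv q (hinv q j y) \<noteq> 0"
    using hfun_has_real_derivative hfun_deriv_pos assms(1) by (blast, fastforce)
qed (use hinv_on_branch[OF assms] isCont_hinv[OF assms(1)] in auto)

lemma isCont_hinv_deriv:
  assumes "q > 1" "j \<in> {1,2}"
  shows "isCont (\<lambda>y. inverse (hfun_deriv q (hinv q j y))) y"
proof (rule isCont_o2[OF isCont_hinv[OF assms(1)]])
  have "sqrt q * cos (hinv q j y) + 1 \<noteq> 0"
    using hinv_denominator_nonzero[OF assms] .
  moreover have "hfun_deriv q (hinv q j y) \<noteq> 0"
    using calculation hfun_deriv_pos assms(1) by fastforce
  ultimately show "isCont (\<lambda>x. inverse (hfun_deriv q x)) (hinv q j y)"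
    unfolding hfun_deriv_def by (intro continuous_intros) (auto simp: hfun_deriv_def)
qed

section \<open>The maps \<open>T\<^sub>j\<^sub>,\<^sub>l\<close>\<close>

lemma is_sol_iff_sol_j:
  assumes "q > 1"
  shows "is_sol \<rho> q \<psi> \<theta> \<longleftrightarrow> sol_j \<rho> q 1 \<psi> \<theta> \<or> sol_j \<rho> q 2 \<psi> \<theta>"
    and "\<not> (sol_j \<rho> q 1 \<psi> \<theta> \<and> sol_j \<rho> q 2 \<psi> \<theta>)"
  unfolding sol_j_def is_sol_def in_mod2pi_branch_1_iff[OF assms] in_mod2pi_branch_2_iff[OF assms]
  by auto

lemma deriv_ln_C1_differentiable_on_UNIV:
  fixes \<rho> :: "real \<Rightarrow> real"
  assumes "\<And>t. \<rho> t > 0" "\<rho> C1_differentiable_on UNIV" "deriv \<rho> C1_differentiable_on UNIV"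
  shows "deriv (\<lambda>t. ln (\<rho> t)) C1_differentiable_on UNIV"
proof -
  have "((\<lambda>t. ln (\<rho> t)) has_real_derivative deriv \<rho> t / \<rho> t) (at t)" for t
    using assms(2) unfolding C1_differentiable_on_UNIV_iff_deriv
    by (auto intro!: derivative_eq_intros simp: assms(1) field_simps less_imp_neq[symmetric])
  then have "deriv (\<lambda>t. ln (\<rho> t)) = (\<lambda>t. deriv \<rho> t / \<rho> t)"
    using DERIV_imp_deriv by blast
  moreover have "\<rho> t \<noteq> 0" for t
    using assms(1)[of t] by simp
  ultimately show ?thesis
    using C1_differentiable_on_UNIV_divide[OF assms(3,2)] by simp
qed

definition branch_lift :: "real \<Rightarrow> nat \<Rightarrow> (real \<Rightarrow> real) \<Rightarrow> real \<Rightarrow> real" where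
  "branch_lift q j f \<theta> = \<theta> - hinv q j (f \<theta>)"

lemma C1_circle_lift_branch_lift:
  assumes "q > 1" "j \<in> {1,2}" "f C1_differentiable_on UNIV" "\<And>x. f (x + 2*pi) = f x"
    and "\<And>x. deriv f x < sqrt q / (1 + sqrt q)"
  shows "C1_circle_lift (branch_lift q j f)"
proof (rule C1_circle_lift_intro)
  have f: "\<And>x. (f has_real_derivative deriv f x) (at x)" "continuous_on UNIV (deriv f)"
    using assms(3) unfolding C1_differentiable_on_UNIV_iff_deriv by auto
  define hinv' where "hinv' y = inverse (hfun_deriv q (hinv q j y))" for y
  show "(branch_lift q j f has_real_derivative 1 - deriv f x * hinv' (f x)) (at x)" for x
    using DERIV_chain2[OF hinv_has_real_derivative[OF assms(1,2)] f(1)]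
    unfolding branch_lift_def[abs_def] hinv'_def
    by (auto intro!: derivative_eq_intros simp: mult.commute)
  have "isCont (\<lambda>x. hinv' (f x)) x" for x
  proof (rule isCont_o2[where f = f and g = hinv'])
    show "isCont f x"
      using C1_differentiable_imp_continuous_on[OF assms(3)]
      by (simp add: continuous_on_eq_continuous_at)
    show "isCont hinv' (f x)"
      unfolding hinv'_def by (rule isCont_hinv_deriv[OF assms(1,2)])
  qed
  then show "continuous_on UNIV (\<lambda>x. 1 - deriv f x * hinv' (f x))"
    using f(2) by (auto intro!: continuous_intros simp: continuous_on_eq_continuous_at)
  show "1 - deriv f x * hinv' (f x) > 0" for x
  proof -
    have "sqrt q * cos (hinv q j (f x)) + 1 \<noteq> 0"
      using hinv_denominator_nonzero[OF assms(1,2)] .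
    then have "deriv f x < hfun_deriv q (hinv q j (f x))" "hfun_deriv q (hinv q j (f x)) > 0"
      using assms(5)[of x] hfun_deriv_lower_bound hfun_deriv_pos assms(1) by fastforce+
    then show ?thesis
      unfolding hinv'_def by (simp add: divide_inverse[symmetric])
  qed
  show "branch_lift q j f (x + 2*pi) = branch_lift q j f x + 2*pi" for x
    unfolding branch_lift_def using assms(4) by simp
qed

lemma sol_j_iff_rcong:
  assumes "q > 1" "j \<in> {1,2}"
  shows "sol_j \<rho> q j \<psi> \<theta> \<longleftrightarrow> [branch_lift q j (deriv (\<lambda>t. ln (\<rho> t))) \<theta> = \<psi>] (rmod 2*pi)"
proof -
  define y where "y = deriv (\<lambda>t. ln (\<rho> t)) \<theta>"
  have "sol_j \<rho> q j \<psi> \<theta> \<longleftrightarrow> sqrt q * cos (\<theta> - \<psi>) + 1 \<noteq> 0 \<and> hfun q (\<theta> - \<psi>) = y \<and>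
      (\<exists>x. [\<theta> - \<psi> = x] (rmod 2*pi) \<and> on_branch q j x)"
    unfolding sol_j_def is_sol_def branch_condition_iff[OF assms(2)] y_def by auto
  also have "\<dots> \<longleftrightarrow> (\<exists>x. [\<theta> - \<psi> = x] (rmod 2*pi) \<and> on_branch q j x \<and> hfun q x = y)"
  proof
    assume "sqrt q * cos (\<theta> - \<psi>) + 1 \<noteq> 0 \<and> hfun q (\<theta> - \<psi>) = y \<and>
      (\<exists>x. [\<theta> - \<psi> = x] (rmod 2*pi) \<and> on_branch q j x)"
    then obtain x where "hfun q (\<theta> - \<psi>) = y" "[\<theta> - \<psi> = x] (rmod 2*pi)" "on_branch q j x"
      by blast
    then show "\<exists>x. [\<theta> - \<psi> = x] (rmod 2*pi) \<and> on_branch q j x \<and> hfun q x = y"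
      using hfun_rcong by auto
  next
    assume "\<exists>x. [\<theta> - \<psi> = x] (rmod 2*pi) \<and> on_branch q j x \<and> hfun q x = y"
    then obtain x where x: "[\<theta> - \<psi> = x] (rmod 2*pi)" "on_branch q j x" "hfun q x = y"
      by blast
    then show "sqrt q * cos (\<theta> - \<psi>) + 1 \<noteq> 0 \<and> hfun q (\<theta> - \<psi>) = y \<and>
      (\<exists>x. [\<theta> - \<psi> = x] (rmod 2*pi) \<and> on_branch q j x)"
      using on_branch_denominator_nonzero[OF assms x(2)] cos_rcong[OF x(1)] hfun_rcong[OF x(1)]
      by auto
  qed
  also have "\<dots> \<longleftrightarrow> [\<theta> - \<psi> = hinv q j y] (rmod 2*pi)"
  proof
    assume "\<exists>x. [\<theta> - \<psi> = x] (rmod 2*pi) \<and> on_branch q j x \<and> hfun q x = y"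
    then obtain x where "[\<theta> - \<psi> = x] (rmod 2*pi)" "on_branch q j x" "hfun q x = y"
      by blast
    then show "[\<theta> - \<psi> = hinv q j y] (rmod 2*pi)"
      using hinv_unique[OF assms] by fastforce
  qed (use hinv_on_branch[OF assms] in blast)
  also have "\<dots> \<longleftrightarrow> [\<theta> - hinv q j y = \<psi>] (rmod 2*pi)"
    unfolding rcong_altdef by (intro ex_cong1 iffI; linarith)
  finally show ?thesis
    unfolding branch_lift_def y_def .
qed

lemma sol_j_solutions:
  assumes "q > 1" "j \<in> {1,2}" "C1_circle_lift (branch_lift q j (deriv (\<lambda>t. ln (\<rho> t))))"
  shows "{\<theta> \<in> {0..<2*pi}. sol_j \<rho> q j \<psi> \<theta>}
    = {inv (branch_lift q j (deriv (\<lambda>t. ln (\<rho> t)))) \<psi> rmod (2*pi)}"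
  using C1_circle_lift_solutions[OF assms(3)] sol_j_iff_rcong[OF assms(1,2)] by simp

lemma solutions_count:
  assumes "q > 1" "\<And>j. j \<in> {1,2} \<Longrightarrow> C1_circle_lift (branch_lift q j (deriv (\<lambda>t. ln (\<rho> t))))"
  shows "\<forall>\<psi>. card {\<theta> \<in> {0..<2*pi}. is_sol \<rho> q \<psi> \<theta>} = 2 \<and>
    (\<forall>j\<in>{1,2}. \<exists>!\<theta>. \<theta> \<in> {0..<2*pi} \<and> sol_j \<rho> q j \<psi> \<theta>)"
proof (intro allI conjI ballI)
  fix \<psi> :: real and j :: nat
  define sol where "sol j = inv (branch_lift q j (deriv (\<lambda>t. ln (\<rho> t)))) \<psi> rmod (2*pi)" for j
  have sols: "\<theta> \<in> {0..<2*pi} \<and> sol_j \<rho> q j \<psi> \<theta> \<longleftrightarrow> \<theta> = sol j" if "j \<in> {1,2}" for j \<theta>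
    using sol_j_solutions[OF assms(1) that assms(2)[OF that]] unfolding sol_def by blast
  then have "{\<theta> \<in> {0..<2*pi}. is_sol \<rho> q \<psi> \<theta>} = {sol 1, sol 2}"
    using is_sol_iff_sol_j(1)[OF assms(1)] by auto
  moreover have "sol 1 \<noteq> sol 2"
    using sols is_sol_iff_sol_j(2)[OF assms(1)] by blast
  ultimately show "card {\<theta> \<in> {0..<2*pi}. is_sol \<rho> q \<psi> \<theta>} = 2"
    by simp
  show "\<exists>!\<theta>. \<theta> \<in> {0..<2*pi} \<and> sol_j \<rho> q j \<psi> \<theta>" if "j \<in> {1,2}"
    using sols[OF that] by simp
qed

lemma ang_T_eq:
  assumes "q > 1" "j \<in> {1,2}" "C1_circle_lift (branch_lift q j (deriv (\<lambda>t. ln (\<rho> t))))"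
  shows "ang_T \<rho> q j l \<phi>
    = inv (branch_lift q j (deriv (\<lambda>t. ln (\<rho> t)))) (\<phi> + real (l - 1) * pi) rmod (2*pi)"
proof -
  have "\<theta> \<in> {0..<2*pi} \<and> sol_j \<rho> q j (\<phi> + real (l - 1) * pi) \<theta> \<longleftrightarrow>
      \<theta> = inv (branch_lift q j (deriv (\<lambda>t. ln (\<rho> t)))) (\<phi> + real (l - 1) * pi) rmod (2*pi)" for \<theta>
    using sol_j_solutions[OF assms] by (auto simp: set_eq_iff)
  then show ?thesis
    unfolding ang_T_def by simp
qed

lemma circ_T_properties:
  assumes "q > 1" "\<And>j. j \<in> {1,2} \<Longrightarrow> C1_circle_lift (branch_lift q j (deriv (\<lambda>t. ln (\<rho> t))))"
  shows "\<forall>j\<in>{1,2}. \<forall>l\<in>{1,2}.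
    bij_betw (circ_T \<rho> q j l) (sphere 0 1) (sphere 0 1) \<and>
    (\<forall>t0 (\<kappa>::int). \<exists>L.
       continuous_on {t0..t0 + 2*pi} L \<and>
       L t0 = ang_T \<rho> q j l t0 + 2 * pi * of_int \<kappa> \<and>
       L (t0 + 2*pi) = ang_T \<rho> q j l t0 + 2 * pi * (of_int \<kappa> + 1) \<and>
       (\<forall>t\<in>{t0..t0 + 2*pi}. cis (L t) = cis (ang_T \<rho> q j l t)) \<and>
       strict_mono_on {t0..t0 + 2*pi} L \<and>
       L C1_differentiable_on {t0<..<t0 + 2*pi})"
proof (intro ballI conjI)
  fix j l :: nat
  assume j: "j \<in> {1,2}"
  define G where "G = branch_lift q j (deriv (\<lambda>t. ln (\<rho> t)))"
  define c where "c = real (l - 1) * pi"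
  define P where "P \<phi> = inv G (\<phi> + c)" for \<phi>
  have G: "C1_circle_lift G" and P: "C1_circle_lift P"
    using assms(2)[OF j] C1_circle_lift_translate[OF C1_circle_lift_inv]
    unfolding G_def P_def[abs_def] by auto
  have ang: "ang_T \<rho> q j l = (\<lambda>\<phi>. P \<phi> rmod (2*pi))"
    using ang_T_eq[OF assms(1) j assms(2)[OF j]] unfolding P_def G_def c_def by auto
  have "bij_betw (\<lambda>\<eta>. cis (P (Arg \<eta>))) (sphere 0 1) (sphere 0 1)"
  proof (rule bij_betw_sphere_circle_lifts[where Q = "\<lambda>\<alpha>. G \<alpha> - c"])
    have "bij G"
      using C1_circle_lift_bij[OF G] .
    then show "P (G \<alpha> - c) = \<alpha>" "G (P \<phi>) - c = \<phi>" for \<alpha> \<phi>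
      unfolding P_def by (simp_all add: bij_is_surj bij_is_inj surj_f_inv_f)
    show "P (x + 2*pi) = P x + 2*pi" "G (x + 2*pi) - c = G x - c + 2*pi" for x
      using G P unfolding C1_circle_lift_def by simp_all
  qed
  then show "bij_betw (circ_T \<rho> q j l) (sphere 0 1) (sphere 0 1)"
    unfolding circ_T_def ang by simp
  show "\<forall>t0 (\<kappa>::int). \<exists>L.
       continuous_on {t0..t0 + 2*pi} L \<and>
       L t0 = ang_T \<rho> q j l t0 + 2 * pi * of_int \<kappa> \<and>
       L (t0 + 2*pi) = ang_T \<rho> q j l t0 + 2 * pi * (of_int \<kappa> + 1) \<and>
       (\<forall>t\<in>{t0..t0 + 2*pi}. cis (L t) = cis (ang_T \<rho> q j l t)) \<and>
       strict_mono_on {t0..t0 + 2*pi} L \<and>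
       L C1_differentiable_on {t0<..<t0 + 2*pi}"
    unfolding ang using C1_circle_lift_local_lift[OF P] by blast
qed

theorem lemma5:
  fixes q :: real and \<rho> :: "real \<Rightarrow> real"
  assumes "q > 1"
    and "\<forall>t. \<rho> t > 0"
    and "\<forall>t. \<rho> (t + 2 * pi) = \<rho> t"
    and "\<rho> C1_differentiable_on UNIV"
    and "deriv \<rho> C1_differentiable_on UNIV"
    and "\<forall>t. deriv (deriv (\<lambda>s. ln (\<rho> s))) t < sqrt q / (1 + sqrt q)"
  shows "(\<forall>\<psi>. card {\<theta> \<in> {0..<2*pi}. is_sol \<rho> q \<psi> \<theta>} = 2 \<and>
            (\<forall>j\<in>{1,2}. \<exists>!\<theta>. \<theta> \<in> {0..<2*pi} \<and> sol_j \<rho> q j \<psi> \<theta>))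
       \<and> (\<forall>j\<in>{1,2}. \<forall>l\<in>{1,2}.
            bij_betw (circ_T \<rho> q j l) (sphere 0 1) (sphere 0 1) \<and>
            (\<forall>t0 (\<kappa>::int). \<exists>L.
               continuous_on {t0..t0 + 2*pi} L \<and>
               L t0 = ang_T \<rho> q j l t0 + 2 * pi * of_int \<kappa> \<and>
               L (t0 + 2*pi) = ang_T \<rho> q j l t0 + 2 * pi * (of_int \<kappa> + 1) \<and>
               (\<forall>t\<in>{t0..t0 + 2*pi}. cis (L t) = cis (ang_T \<rho> q j l t)) \<and>
               strict_mono_on {t0..t0 + 2*pi} L \<and>
               L C1_differentiable_on {t0<..<t0 + 2*pi}))"
proof -
  have lift: "C1_circle_lift (branch_lift q j (deriv (\<lambda>s. ln (\<rho> s))))" if "j \<in> {1,2}" for j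
  proof (rule C1_circle_lift_branch_lift[OF assms(1) that])
    show "deriv (\<lambda>s. ln (\<rho> s)) C1_differentiable_on UNIV"
      using deriv_ln_C1_differentiable_on_UNIV assms(2,4,5) by blast
    show "deriv (\<lambda>s. ln (\<rho> s)) (x + 2*pi) = deriv (\<lambda>s. ln (\<rho> s)) x" for x
      using assms(3) by (intro deriv_periodic) simp
  qed (use assms(6) in blast)
  show ?thesis
    using solutions_count[OF assms(1) lift] circ_T_properties[OF assms(1) lift] by (rule conjI)
qed

end
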